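(* Let $x_1,\dots,x_N\in S^2\times H$ be the points of a point cloud, represented by $f(x)=\frac{1}{N}\sum_{i=1}^N\delta(x-x_i)$, and let $\psi: S^2\times H\to\mathbb{R}$ satisfy $\psi(Z(\theta)x)=\psi(x)$ for all $x\in S^2\times H$ and all angles $\theta$. Define the sparse correlation at the point $x_j$ by $$[\psi\ast f](x_j)=\int_{S^2\times H}\psi(\mathcal{T}(x_j)^{-1}x)f(x)\,dx=\frac{1}{N}\sum_{i=1}^N\psi(\mathcal{T}(x_j)^{-1}x_i).$$ Then for every $Q\in SO(3)$ and every $j$, $[\psi\ast L_Qf](Qx_j)=[\psi\ast f](x_j)$, where $L_Qf(x)=f(Q^{-1}x)$ is the rotated point cloud $\frac1N\sum_i\delta(x-Qx_i)$; explicitly, $$\frac{1}{N}\sum_{i=1}^N\psi(\mathcal{T}(Qx_j)^{-1}Qx_i)=\frac{1}{N}\sum_{i=1}^N\psi(\mathcal{T}(x_j)^{-1}x_i).$$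
   Context: $Z(\theta)$, $Y(\theta)$ are the rotation matrices about the $z$- and $y$-axes by angle $\theta$; $n=(0,0,1)^T$; points of $S^2$ are $s(\alpha,\beta)=Z(\alpha)Y(\beta)n$ with $\alpha\in[0,2\pi]$, $\beta\in[0,\pi]$; $H=[0,1]$; a point of $S^2\times H$ is $(s,h)$ (direction and radial distance of a point of the unit ball). A rotation $Q\in SO(3)$ acts on $S^2\times H$ by $Q(s,h)=(Qs,h)$. The map $\mathcal{T}: S^2\times H\to SO(3)$ is $\mathcal{T}(s(\alpha,\beta),h)=Z(\alpha)Y(\beta)Z(2\pi h)$. $\delta$ is the Dirac delta. *)

theory Defs
  imports "HOL-Analysis.Analysis"
begin

definition Zrot :: "real \<Rightarrow> real^3^3" where
  "Zrot t = vector [vector [cos t, - sin t, 0], vector [sin t, cos t, 0], vector [0, 0, 1]]"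

definition Yrot :: "real \<Rightarrow> real^3^3" where
  "Yrot t = vector [vector [cos t, 0, sin t], vector [0, 1, 0], vector [- sin t, 0, cos t]]"

definition nvec :: "real^3" where
  "nvec = vector [0, 0, 1]"

definition sph :: "real \<Rightarrow> real \<Rightarrow> real^3" where
  "sph a b = Zrot a *v (Yrot b *v nvec)"

definition S2H :: "((real^3) \<times> real) set" where
  "S2H = {(s, h). norm s = 1 \<and> h \<in> {0..1}}"

definition SO3 :: "(real^3^3) set" where
  "SO3 = {Q. orthogonal_matrix Q \<and> det Q = 1}"

definition act :: "real^3^3 \<Rightarrow> (real^3) \<times> real \<Rightarrow> (real^3) \<times> real" where
  "act Q x = (Q *v fst x, snd x)"

text \<open>The map T(s(alpha,beta),h) = Z(alpha) Y(beta) Z(2 pi h); the spherical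
  coordinates (alpha,beta) of s are some chosen coordinates in the stated ranges.\<close>
definition Tmap :: "(real^3) \<times> real \<Rightarrow> real^3^3" where
  "Tmap x = (let (a, b) = (SOME (a, b). a \<in> {0..2*pi} \<and> b \<in> {0..pi} \<and> fst x = sph a b)
             in Zrot a ** Yrot b ** Zrot (2 * pi * snd x))"

definition sparse_corr :: "((real^3) \<times> real \<Rightarrow> real) \<Rightarrow> nat \<Rightarrow> (nat \<Rightarrow> (real^3) \<times> real) \<Rightarrow> (real^3) \<times> real \<Rightarrow> real" where
  "sparse_corr psi N xs y = (1 / real N) * (\<Sum>i<N. psi (act (matrix_inv (Tmap y)) (xs i)))"

end

theory Submission imports Defs begin

text \<open>Write \<open>T\<close> for \<open>Tmap\<close>. Both \<open>T(x)\<close> and \<open>T(Qx)\<close> are rotations carrying the north pole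
  \<open>n\<close> to the respective directions \<open>s\<close> and \<open>Qs\<close>, so \<open>T(Qx)\<^sup>-\<^sup>1 Q T(x)\<close> is a rotation fixing \<open>n\<close>,
  i.e. some \<open>Z(t)\<close>. Hence \<open>T(Qx)\<^sup>-\<^sup>1 Q = Z(t) T(x)\<^sup>-\<^sup>1\<close>, and the \<open>Z\<close>-invariance of \<open>\<psi>\<close> makes
  the two correlation sums agree term by term.\<close>

lemma matrix_inv_orthogonal:
  fixes A :: "real^'n^'n"
  assumes "orthogonal_matrix A"
  shows "matrix_inv A = transpose A"
proof -
  have "\<exists>B. A ** B = mat 1 \<and> B ** A = mat 1"
    using assms by (auto simp: orthogonal_matrix_def)
  then have right_inv: "A ** matrix_inv A = mat 1"
    unfolding matrix_inv_def by (rule someI2_ex) blast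
  have "matrix_inv A = (transpose A ** A) ** matrix_inv A"
    using assms by (simp add: orthogonal_matrix_def)
  also have "\<dots> = transpose A ** (A ** matrix_inv A)"
    by (simp only: matrix_mul_assoc)
  finally show ?thesis
    by (simp add: right_inv)
qed

lemma norm_orthogonal_matrix_vector_mult:
  fixes A :: "real^'n^'n"
  assumes "orthogonal_matrix A"
  shows "norm (A *v v) = norm v"
  using assms orthogonal_transformation_matrix orthogonal_transformation_norm
  by (metis matrix_of_matrix_vector_mul matrix_vector_mul_linear)

lemma SO3_mult: "A \<in> SO3 \<Longrightarrow> B \<in> SO3 \<Longrightarrow> A ** B \<in> SO3"
  by (simp add: SO3_def orthogonal_matrix_mul det_mul)

lemma SO3_transpose: "A \<in> SO3 \<Longrightarrow> transpose A \<in> SO3"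
  by (simp add: SO3_def det_transpose)

lemma Zrot_in_SO3: "Zrot t \<in> SO3"
  by (auto simp: SO3_def orthogonal_matrix_def Zrot_def vec_eq_iff forall_3 matrix_matrix_mult_def
      sum_3 transpose_def mat_def det_3 power2_eq_square[symmetric])

lemma Yrot_in_SO3: "Yrot t \<in> SO3"
  by (auto simp: SO3_def orthogonal_matrix_def Yrot_def vec_eq_iff forall_3 matrix_matrix_mult_def
      sum_3 transpose_def mat_def det_3 power2_eq_square[symmetric])

lemma Zrot_nvec: "Zrot t *v nvec = nvec"
  by (simp add: Zrot_def nvec_def vec_eq_iff forall_3 matrix_vector_mult_def sum_3)

lemma act_act: "act A (act B x) = act (A ** B) x"
  by (simp add: act_def matrix_vector_mul_assoc)

lemma norm_fst_act: "orthogonal_matrix A \<Longrightarrow> norm (fst (act A x)) = norm (fst x)"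
  by (simp add: act_def norm_orthogonal_matrix_vector_mult)

lemma act_in_S2H: "orthogonal_matrix A \<Longrightarrow> x \<in> S2H \<Longrightarrow> act A x \<in> S2H"
  by (auto simp: S2H_def act_def norm_orthogonal_matrix_vector_mult)

lemma sph_surjective:
  assumes "norm s = 1"
  shows "\<exists>a b. a \<in> {0..2*pi} \<and> b \<in> {0..pi} \<and> s = sph a b"
proof -
  have sum_sq: "(s$1)^2 + (s$2)^2 + (s$3)^2 = 1"
    using assms by (simp add: norm_eq_1 inner_vec_def sum_3 power2_eq_square)
  then have "(s$3)^2 \<le> 1"
    using zero_le_power2[of "s$1"] zero_le_power2[of "s$2"] by linarith
  then have "\<bar>s$3\<bar> \<le> 1"
    by (simp add: abs_square_le_1)
  then have s3: "-1 \<le> s$3" "s$3 \<le> 1"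
    by (simp_all add: abs_le_iff)
  define b where "b = arccos (s$3)"
  have b: "b \<in> {0..pi}" "cos b = s$3"
    using s3 by (auto simp: b_def arccos_lbound arccos_ubound cos_arccos)
  have "1 - (s$3)^2 = (s$1)^2 + (s$2)^2"
    using sum_sq by linarith
  then have sin_b: "sin b = sqrt ((s$1)^2 + (s$2)^2)"
    using s3 by (simp add: b_def sin_arccos)
  show ?thesis
  proof (cases "(s$1)^2 + (s$2)^2 = 0")
    case True
    then have "s$1 = 0" "s$2 = 0"
      by (simp_all add: sum_power2_eq_zero_iff)
    with True sin_b b show ?thesis
      by (intro exI[of _ 0] exI[of _ b])
        (auto simp: sph_def Zrot_def Yrot_def nvec_def vec_eq_iff forall_3 matrix_vector_mult_def sum_3)
  next
    case False
    define r where "r = sqrt ((s$1)^2 + (s$2)^2)"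
    have r: "r > 0"
      using False by (simp add: r_def add_nonneg_nonneg order_le_neq_trans)
    have "(s$1/r)^2 + (s$2/r)^2 = 1"
      using False by (simp add: r_def power_divide add_divide_distrib[symmetric])
    then obtain a where a: "0 \<le> a" "a < 2*pi" "s$1/r = cos a" "s$2/r = sin a"
      by (rule sincos_total_2pi)
    have "s$1 = cos a * sin b" "s$2 = sin a * sin b"
      using a(3,4) r sin_b unfolding r_def[symmetric] by (auto simp: field_simps)
    with a b show ?thesis
      by (intro exI[of _ a] exI[of _ b])
        (auto simp: sph_def Zrot_def Yrot_def nvec_def vec_eq_iff forall_3 matrix_vector_mult_def sum_3)
  qed
qed

lemma Tmap_in_SO3_nvec:
  assumes "norm (fst x) = 1"
  shows "Tmap x \<in> SO3" "Tmap x *v nvec = fst x"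
proof -
  define P where "P = (\<lambda>(a, b). a \<in> {0..2*pi} \<and> b \<in> {0..pi} \<and> fst x = sph a b)"
  obtain a b where ab: "(SOME p. P p) = (a, b)"
    by (metis surj_pair)
  have "\<exists>p. P p"
    using sph_surjective[OF assms] unfolding P_def by auto
  then have "P (a, b)"
    using someI_ex ab by metis
  then have s: "fst x = sph a b"
    unfolding P_def by simp
  have T: "Tmap x = Zrot a ** Yrot b ** Zrot (2 * pi * snd x)"
    using ab unfolding Tmap_def P_def by simp
  show "Tmap x \<in> SO3"
    unfolding T by (intro SO3_mult Zrot_in_SO3 Yrot_in_SO3)
  show "Tmap x *v nvec = fst x"
    unfolding T s by (simp add: sph_def Zrot_nvec flip: matrix_vector_mul_assoc)
qed

text \<open>The third column of \<open>R\<close> is \<open>n\<close>, so by orthogonality the third row is \<open>n\<close> as well; the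
  remaining \<open>2\<times>2\<close> block is orthogonal with determinant \<open>1\<close>, hence a plane rotation.\<close>

lemma SO3_fixing_nvec_is_Zrot:
  assumes "R \<in> SO3" and fixed: "R *v nvec = nvec"
  obtains t where "R = Zrot t"
proof -
  have col3: "R$1$3 = 0" "R$2$3 = 0" "R$3$3 = 1"
    using fixed by (auto simp: nvec_def vec_eq_iff forall_3 matrix_vector_mult_def sum_3)
  have orth: "R ** transpose R = mat 1" "transpose R ** R = mat 1" and det: "det R = 1"
    using assms(1) by (auto simp: SO3_def orthogonal_matrix_def)
  have rows: "(\<Sum>j\<in>UNIV. R$i$j * R$k$j) = (if i = k then 1 else 0)" for i k
    using orth(1) by (simp add: vec_eq_iff matrix_matrix_mult_def transpose_def mat_def)
  have cols: "(\<Sum>j\<in>UNIV. R$j$i * R$j$k) = (if i = k then 1 else 0)" for i k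
    using orth(2) by (simp add: vec_eq_iff matrix_matrix_mult_def transpose_def mat_def)
  have "R$3$1^2 + R$3$2^2 = 0"
    using rows[of 3 3] col3 by (simp add: sum_3 power2_eq_square)
  then have row3: "R$3$1 = 0" "R$3$2 = 0"
    by (simp_all add: sum_power2_eq_zero_iff)
  have unit: "R$1$1^2 + R$2$1^2 = 1"
    using cols[of 1 1] row3 by (simp add: sum_3 power2_eq_square)
  have perp: "R$1$1 * R$1$2 + R$2$1 * R$2$2 = 0"
    using cols[of 1 2] row3 by (simp add: sum_3)
  have det2: "R$1$1 * R$2$2 - R$1$2 * R$2$1 = 1"
    using det col3 row3 by (simp add: det_3)
  obtain t where t: "R$1$1 = cos t" "R$2$1 = sin t"
    using sincos_total_2pi[OF unit] by metis
  have "R$2$2 = cos t * (R$1$1 * R$2$2 - R$1$2 * R$2$1) + sin t * (R$1$1 * R$1$2 + R$2$1 * R$2$2)"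
    "R$1$2 = - sin t * (R$1$1 * R$2$2 - R$1$2 * R$2$1) + cos t * (R$1$1 * R$1$2 + R$2$1 * R$2$2)"
    using sin_cos_squared_add[of t] unfolding t by algebra+
  then have "R$2$2 = cos t" "R$1$2 = - sin t"
    using det2 perp by simp_all
  then have "R = Zrot t"
    by (simp add: vec_eq_iff forall_3 Zrot_def col3 row3 t)
  then show thesis ..
qed

lemma Tmap_act_equivariant:
  assumes "Q \<in> SO3" and "norm (fst x) = 1"
  obtains t where "transpose (Tmap (act Q x)) ** Q = Zrot t ** transpose (Tmap x)"
proof -
  define T where "T = Tmap x"
  define T' where "T' = Tmap (act Q x)"
  have "norm (fst (act Q x)) = 1"
    using assms by (simp add: SO3_def norm_fst_act)
  note T = Tmap_in_SO3_nvec[OF assms(2), folded T_def]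
    and T' = Tmap_in_SO3_nvec[OF this, folded T'_def]
  have T'_orth: "transpose T' ** T' = mat 1" and T_orth: "T ** transpose T = mat 1"
    using T(1) T'(1) by (simp_all add: SO3_def orthogonal_matrix_def)
  have "(transpose T' ** Q ** T) *v nvec = transpose T' *v (T' *v nvec)"
    using T(2) T'(2) by (simp add: act_def flip: matrix_vector_mul_assoc)
  also have "\<dots> = nvec"
    using T'_orth by (simp add: matrix_vector_mul_assoc)
  finally have "(transpose T' ** Q ** T) *v nvec = nvec" .
  moreover have "transpose T' ** Q ** T \<in> SO3"
    using assms(1) T(1) T'(1) by (intro SO3_mult SO3_transpose)
  ultimately obtain t where t: "transpose T' ** Q ** T = Zrot t"
    using SO3_fixing_nvec_is_Zrot by blast
  have "transpose T' ** Q = transpose T' ** Q ** (T ** transpose T)"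
    by (simp add: T_orth)
  also have "\<dots> = Zrot t ** transpose T"
    by (simp add: matrix_mul_assoc flip: t)
  finally show thesis
    using that unfolding T_def T'_def by blast
qed

theorem theorem4:
  fixes N :: nat and xs :: "nat \<Rightarrow> (real^3) \<times> real" and psi :: "(real^3) \<times> real \<Rightarrow> real"
    and Q :: "real^3^3" and j :: nat
  assumes "\<forall>i<N. xs i \<in> S2H"
    and "\<forall>x\<in>S2H. \<forall>t. psi (act (Zrot t) x) = psi x"
    and "Q \<in> SO3"
    and "j < N"
  shows "sparse_corr psi N (\<lambda>i. act Q (xs i)) (act Q (xs j)) = sparse_corr psi N xs (xs j)"
proof -
  have unit: "norm (fst (xs j)) = 1"
    using assms(1,4) by (auto simp: S2H_def)
  then have "norm (fst (act Q (xs j))) = 1"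
    using assms(3) by (simp add: SO3_def norm_fst_act)
  then have inv: "matrix_inv (Tmap (xs j)) = transpose (Tmap (xs j))"
    "matrix_inv (Tmap (act Q (xs j))) = transpose (Tmap (act Q (xs j)))"
    using Tmap_in_SO3_nvec(1) unit by (simp_all add: SO3_def matrix_inv_orthogonal)
  obtain t where t: "transpose (Tmap (act Q (xs j))) ** Q = Zrot t ** transpose (Tmap (xs j))"
    using Tmap_act_equivariant[OF assms(3) unit] .
  have "psi (act (transpose (Tmap (act Q (xs j)))) (act Q (xs i)))
      = psi (act (transpose (Tmap (xs j))) (xs i))" if "i < N" for i
  proof -
    have "act (transpose (Tmap (xs j))) (xs i) \<in> S2H"
      using Tmap_in_SO3_nvec(1)[OF unit] assms(1) that by (intro act_in_S2H) (simp_all add: SO3_def)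
    moreover have "act (transpose (Tmap (act Q (xs j)))) (act Q (xs i))
        = act (Zrot t) (act (transpose (Tmap (xs j))) (xs i))"
      by (simp only: act_act t)
    ultimately show ?thesis
      using assms(2) by simp
  qed
  then show ?thesis
    unfolding sparse_corr_def inv by simp
qed

end
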